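(* (Provably in $\mathsf{Z}^-_{\mathrm{FTM}\omega}$.) For any set $X$ there is a digraph $A\subseteq\omega\times\omega$ which is well-founded, extensional and vertex, such that $X=\eta_A(\mathrm{ver}(A))$.
   Context: $\mathsf{Z}^-_{\mathrm{FTM}\omega}$ is Zermelo set theory without Power Set and Choice (Extensionality, Pairing, Union, Infinity, Regularity, Separation) plus: (FC) every set $X$ has a superset $Y$ containing all finite subsets of $Y$; (TS) every set has a transitive superset; (MC) every set binary relation (digraph) $A$ that is well-founded (every nonempty subset of $\mathrm{fld}(A)=\mathrm{dom}A\cup\mathrm{ran}A$ has an element $a$ with no element $j$ of the subset satisfying $jAa$) and extensional (for $u,v\in\mathrm{fld}(A)$, $\{j:jAu\}=\{j:jAv\}$ implies $u=v$) admits a transitive set $X$ and a bijection $\eta:\mathrm{fld}(A)\to X$ with $jAk\iff\eta(j)\in\eta(k)$ (this $\eta$ is unique and denoted $\eta_A$); (Count) every set admits an injection into $\omega$. A digraph $A$ is vertex if $A=\emptyset$ or there is a unique $v=\mathrm{ver}(A)\in\mathrm{fld}(A)$ such that every $j\in\mathrm{fld}(A)$ is connected to $v$ by a finite chain $j=j_0Aj_1A\cdots Aj_K=v$ ($K\ge0$). *)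

theory Defs
  imports Main
begin

text \<open>
  We render "provably in Z^-_FTMomega" semantically: the conclusion holds in every
  (first-order) model (M, mem) of the theory, where M is an arbitrary HOL type.
  By Goedel's completeness theorem this is equivalent to provability.  The
  Separation schema is expressed with an explicit datatype of first-order formulas
  in the language {mem, =}, so only first-order definable separation is assumed.
\<close>

datatype fm =
    FMem nat nat
  | FEq nat nat
  | FNeg fm
  | FAnd fm fm
  | FEx nat fm

primrec sat :: "('a \<Rightarrow> 'a \<Rightarrow> bool) \<Rightarrow> (nat \<Rightarrow> 'a) \<Rightarrow> fm \<Rightarrow> bool" where
  "sat mem env (FMem i j) = mem (env i) (env j)"
| "sat mem env (FEq i j) = (env i = env j)"
| "sat mem env (FNeg p) = (\<not> sat mem env p)"
| "sat mem env (FAnd p q) = (sat mem env p \<and> sat mem env q)"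
| "sat mem env (FEx i p) = (\<exists>y. sat mem (env(i := y)) p)"

context
  fixes mem :: "'a \<Rightarrow> 'a \<Rightarrow> bool" (infix "\<in>\<^sub>m" 50)
begin

definition m_empty :: "'a \<Rightarrow> bool" where
  "m_empty x \<longleftrightarrow> (\<forall>y. \<not> y \<in>\<^sub>m x)"

definition m_subset :: "'a \<Rightarrow> 'a \<Rightarrow> bool" where
  "m_subset x y \<longleftrightarrow> (\<forall>z. z \<in>\<^sub>m x \<longrightarrow> z \<in>\<^sub>m y)"

definition m_upair :: "'a \<Rightarrow> 'a \<Rightarrow> 'a \<Rightarrow> bool" where
  "m_upair z a b \<longleftrightarrow> (\<forall>w. w \<in>\<^sub>m z \<longleftrightarrow> (w = a \<or> w = b))"

definition m_pair :: "'a \<Rightarrow> 'a \<Rightarrow> 'a \<Rightarrow> bool" where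
  "m_pair p a b \<longleftrightarrow> (\<forall>w. w \<in>\<^sub>m p \<longleftrightarrow> (m_upair w a a \<or> m_upair w a b))"

definition m_succ :: "'a \<Rightarrow> 'a \<Rightarrow> bool" where
  "m_succ s x \<longleftrightarrow> (\<forall>y. y \<in>\<^sub>m s \<longleftrightarrow> (y \<in>\<^sub>m x \<or> y = x))"

definition m_inductive :: "'a \<Rightarrow> bool" where
  "m_inductive w \<longleftrightarrow> (\<exists>e. e \<in>\<^sub>m w \<and> m_empty e) \<and>
                      (\<forall>x. x \<in>\<^sub>m w \<longrightarrow> (\<exists>s. s \<in>\<^sub>m w \<and> m_succ s x))"

definition m_omega :: "'a \<Rightarrow> bool" where
  "m_omega w \<longleftrightarrow> m_inductive w \<and> (\<forall>z. m_inductive z \<longrightarrow> m_subset w z)"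

definition m_transitive :: "'a \<Rightarrow> bool" where
  "m_transitive x \<longleftrightarrow> (\<forall>y z. y \<in>\<^sub>m x \<longrightarrow> z \<in>\<^sub>m y \<longrightarrow> z \<in>\<^sub>m x)"

definition m_rel :: "'a \<Rightarrow> bool" where
  "m_rel A \<longleftrightarrow> (\<forall>p. p \<in>\<^sub>m A \<longrightarrow> (\<exists>a b. m_pair p a b))"

definition m_edge :: "'a \<Rightarrow> 'a \<Rightarrow> 'a \<Rightarrow> bool" where
  "m_edge A a b \<longleftrightarrow> (\<exists>p. p \<in>\<^sub>m A \<and> m_pair p a b)"

definition m_fld :: "'a \<Rightarrow> 'a \<Rightarrow> bool" where
  "m_fld A x \<longleftrightarrow> (\<exists>y. m_edge A x y \<or> m_edge A y x)"

definition m_wf :: "'a \<Rightarrow> bool" where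
  "m_wf A \<longleftrightarrow> (\<forall>S. (\<exists>x. x \<in>\<^sub>m S) \<and> (\<forall>x. x \<in>\<^sub>m S \<longrightarrow> m_fld A x) \<longrightarrow>
                   (\<exists>a. a \<in>\<^sub>m S \<and> (\<forall>j. j \<in>\<^sub>m S \<longrightarrow> \<not> m_edge A j a)))"

definition m_extensional :: "'a \<Rightarrow> bool" where
  "m_extensional A \<longleftrightarrow> (\<forall>u v. m_fld A u \<and> m_fld A v \<and>
                          (\<forall>j. m_edge A j u \<longleftrightarrow> m_edge A j v) \<longrightarrow> u = v)"

definition m_fun :: "'a \<Rightarrow> bool" where
  "m_fun f \<longleftrightarrow> m_rel f \<and> (\<forall>x y y'. m_edge f x y \<and> m_edge f x y' \<longrightarrow> y = y')"

definition m_injective :: "'a \<Rightarrow> bool" where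
  "m_injective f \<longleftrightarrow> (\<forall>x x' y. m_edge f x y \<and> m_edge f x' y \<longrightarrow> x = x')"

definition m_dom :: "'a \<Rightarrow> 'a \<Rightarrow> bool" where
  "m_dom f X \<longleftrightarrow> (\<forall>x. (\<exists>y. m_edge f x y) \<longleftrightarrow> x \<in>\<^sub>m X)"

definition m_ran :: "'a \<Rightarrow> 'a \<Rightarrow> bool" where
  "m_ran f Y \<longleftrightarrow> (\<forall>y. (\<exists>x. m_edge f x y) \<longleftrightarrow> y \<in>\<^sub>m Y)"

text \<open>function value f(x) = y, with the convention f(x) = \<emptyset> for x outside dom f\<close>
definition m_val :: "'a \<Rightarrow> 'a \<Rightarrow> 'a \<Rightarrow> bool" where
  "m_val f x y \<longleftrightarrow> m_edge f x y \<or> ((\<nexists>z. m_edge f x z) \<and> m_empty y)"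

definition m_finite :: "'a \<Rightarrow> bool" where
  "m_finite F \<longleftrightarrow> (\<exists>w n f. m_omega w \<and> n \<in>\<^sub>m w \<and> m_fun f \<and> m_injective f \<and>
                      m_dom f n \<and> m_ran f F)"

definition m_collapse :: "'a \<Rightarrow> 'a \<Rightarrow> 'a \<Rightarrow> bool" where
  "m_collapse A X eta \<longleftrightarrow>
     m_transitive X \<and> m_fun eta \<and> m_injective eta \<and>
     (\<forall>x. (\<exists>y. m_edge eta x y) \<longleftrightarrow> m_fld A x) \<and> m_ran eta X \<and>
     (\<forall>j k a b. m_edge eta j a \<and> m_edge eta k b \<longrightarrow> (m_edge A j k \<longleftrightarrow> a \<in>\<^sub>m b))"

text \<open>there is a finite chain j = j_0 A j_1 A ... A j_K = v (K \<ge> 0):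
  c is a function with domain K+1 = {0,...,K}, K \<in> omega\<close>
definition m_chain :: "'a \<Rightarrow> 'a \<Rightarrow> 'a \<Rightarrow> bool" where
  "m_chain A j v \<longleftrightarrow>
     (\<exists>w K K1 c e. m_omega w \<and> K \<in>\<^sub>m w \<and> m_succ K1 K \<and> m_empty e \<and>
        m_fun c \<and> m_dom c K1 \<and> m_edge c e j \<and> m_edge c K v \<and>
        (\<forall>i i1 a b. i \<in>\<^sub>m K \<and> m_succ i1 i \<and> m_edge c i a \<and> m_edge c i1 b \<longrightarrow> m_edge A a b))"

definition m_is_vertex :: "'a \<Rightarrow> 'a \<Rightarrow> bool" where
  "m_is_vertex A v \<longleftrightarrow> m_fld A v \<and> (\<forall>j. m_fld A j \<longrightarrow> m_chain A j v)"

definition m_vertex_digraph :: "'a \<Rightarrow> bool" where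
  "m_vertex_digraph A \<longleftrightarrow> m_empty A \<or> (\<exists>!v. m_is_vertex A v)"

text \<open>v = ver(A); convention ver(\<emptyset>) = \<emptyset>\<close>
definition m_ver :: "'a \<Rightarrow> 'a \<Rightarrow> bool" where
  "m_ver A v \<longleftrightarrow> (m_empty A \<and> m_empty v) \<or> (\<not> m_empty A \<and> m_is_vertex A v)"

definition Z_FTM_omega :: bool where
  "Z_FTM_omega \<longleftrightarrow>
     \<comment> \<open>Extensionality\<close>
     (\<forall>x y. (\<forall>z. z \<in>\<^sub>m x \<longleftrightarrow> z \<in>\<^sub>m y) \<longrightarrow> x = y) \<and>
     \<comment> \<open>Pairing\<close>
     (\<forall>a b. \<exists>z. m_upair z a b) \<and>
     \<comment> \<open>Union\<close>
     (\<forall>x. \<exists>u. \<forall>y. y \<in>\<^sub>m u \<longleftrightarrow> (\<exists>z. z \<in>\<^sub>m x \<and> y \<in>\<^sub>m z)) \<and>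
     \<comment> \<open>Infinity\<close>
     (\<exists>w. m_inductive w) \<and>
     \<comment> \<open>Regularity\<close>
     (\<forall>x. (\<exists>y. y \<in>\<^sub>m x) \<longrightarrow> (\<exists>y. y \<in>\<^sub>m x \<and> (\<forall>z. z \<in>\<^sub>m y \<longrightarrow> \<not> z \<in>\<^sub>m x))) \<and>
     \<comment> \<open>Separation schema (first-order formulas with parameters)\<close>
     (\<forall>\<phi> env i a. \<exists>b. \<forall>y. y \<in>\<^sub>m b \<longleftrightarrow> (y \<in>\<^sub>m a \<and> sat (\<in>\<^sub>m) (env(i := y)) \<phi>)) \<and>
     \<comment> \<open>FC\<close>
     (\<forall>X. \<exists>Y. m_subset X Y \<and> (\<forall>F. m_subset F Y \<and> m_finite F \<longrightarrow> F \<in>\<^sub>m Y)) \<and>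
     \<comment> \<open>TS\<close>
     (\<forall>X. \<exists>T. m_subset X T \<and> m_transitive T) \<and>
     \<comment> \<open>MC\<close>
     (\<forall>A. m_rel A \<and> m_wf A \<and> m_extensional A \<longrightarrow> (\<exists>X eta. m_collapse A X eta)) \<and>
     \<comment> \<open>Count\<close>
     (\<forall>X. \<exists>w f. m_omega w \<and> m_fun f \<and> m_injective f \<and> m_dom f X \<and>
               (\<forall>y. (\<exists>x. m_edge f x y) \<longrightarrow> y \<in>\<^sub>m w))"

end

end

theory Submission
  imports Defs
begin

text \<open>Let \<open>S\<close> be the transitive closure of \<open>{X}\<close> (by TS and Separation) and \<open>f : S \<rightarrow> \<omega>\<close> an
  injection (by Count). The digraph \<open>A = {(f a, f b) | a, b \<in> S, a \<in> b}\<close> is well-founded by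
  Regularity and extensional by Extensionality, and \<open>f\<inverse>\<close> restricted to \<open>fld A\<close> is its collapse; it sends \<open>f X\<close> to \<open>X\<close>. By \<open>\<in>\<close>-induction along \<open>S\<close>, every element of
  \<open>S\<close> reaches \<open>X\<close> by a finite \<open>\<in>\<close>-chain, so \<open>f X\<close> is a vertex of \<open>A\<close> when \<open>X \<noteq> \<emptyset>\<close>, unique by
  well-foundedness; when \<open>X = \<emptyset>\<close>, \<open>A = \<emptyset>\<close>. Lacking Power Set, the sets of pairs involved (\<open>A\<close>,
  the collapse, the chains) are separated from a pair-closed set provided by FC.\<close>

section \<open>Definable notions\<close>

definition FOr :: "fm \<Rightarrow> fm \<Rightarrow> fm" where "FOr p q = FNeg (FAnd (FNeg p) (FNeg q))"
definition FImp :: "fm \<Rightarrow> fm \<Rightarrow> fm" where "FImp p q = FNeg (FAnd p (FNeg q))"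
definition FIff :: "fm \<Rightarrow> fm \<Rightarrow> fm" where "FIff p q = FAnd (FImp p q) (FImp q p)"
definition FAll :: "nat \<Rightarrow> fm \<Rightarrow> fm" where "FAll i p = FNeg (FEx i (FNeg p))"

lemma sat_FOr [simp]: "sat mem env (FOr p q) \<longleftrightarrow> sat mem env p \<or> sat mem env q"
  and sat_FImp [simp]: "sat mem env (FImp p q) \<longleftrightarrow> (sat mem env p \<longrightarrow> sat mem env q)"
  and sat_FIff [simp]: "sat mem env (FIff p q) \<longleftrightarrow> (sat mem env p \<longleftrightarrow> sat mem env q)"
  and sat_FAll [simp]: "sat mem env (FAll i p) \<longleftrightarrow> (\<forall>y. sat mem (env(i := y)) p)"
  by (auto simp: FOr_def FImp_def FIff_def FAll_def)

text \<open>Bound variables of the formulas below are numbered from \<open>fresh xs\<close> upwards, where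
  \<open>xs\<close> lists the free variables; this makes all satisfaction lemmas unconditional.\<close>

definition fresh :: "nat list \<Rightarrow> nat \<Rightarrow> nat" where
  "fresh xs k = Suc (Max (insert 0 (set xs)) + k)"

lemma fresh_neq [simp]: "x \<in> set xs \<Longrightarrow> fresh xs k \<noteq> x" "x \<in> set xs \<Longrightarrow> x \<noteq> fresh xs k"
proof -
  assume "x \<in> set xs"
  then have "x \<le> Max (insert 0 (set xs))" by simp
  then show "fresh xs k \<noteq> x" "x \<noteq> fresh xs k" by (simp_all add: fresh_def)
qed

lemma fresh_eq_iff [simp]: "fresh xs k = fresh xs l \<longleftrightarrow> k = l"
  by (simp add: fresh_def)

definition fm_empty :: "nat \<Rightarrow> fm" where
  "fm_empty x = (let y = fresh [x] 0 in FAll y (FNeg (FMem y x)))"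

lemma sat_fm_empty [simp]: "sat mem env (fm_empty x) \<longleftrightarrow> m_empty mem (env x)"
  by (simp add: fm_empty_def m_empty_def Let_def)

definition fm_subset :: "nat \<Rightarrow> nat \<Rightarrow> fm" where
  "fm_subset x y = (let z = fresh [x, y] 0 in FAll z (FImp (FMem z x) (FMem z y)))"

lemma sat_fm_subset [simp]: "sat mem env (fm_subset x y) \<longleftrightarrow> m_subset mem (env x) (env y)"
  by (simp add: fm_subset_def m_subset_def Let_def)

definition fm_transitive :: "nat \<Rightarrow> fm" where
  "fm_transitive x = (let y = fresh [x] 0; z = fresh [x] 1 in
     FAll y (FAll z (FImp (FMem y x) (FImp (FMem z y) (FMem z x)))))"

lemma sat_fm_transitive [simp]: "sat mem env (fm_transitive x) \<longleftrightarrow> m_transitive mem (env x)"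
  by (simp add: fm_transitive_def m_transitive_def Let_def)

definition fm_upair :: "nat \<Rightarrow> nat \<Rightarrow> nat \<Rightarrow> fm" where
  "fm_upair z a b = (let y = fresh [z, a, b] 0 in FAll y (FIff (FMem y z) (FOr (FEq y a) (FEq y b))))"

lemma sat_fm_upair [simp]:
  "sat mem env (fm_upair z a b) \<longleftrightarrow> m_upair mem (env z) (env a) (env b)"
  by (simp add: fm_upair_def m_upair_def Let_def)

definition fm_pair :: "nat \<Rightarrow> nat \<Rightarrow> nat \<Rightarrow> fm" where
  "fm_pair p a b = (let y = fresh [p, a, b] 0 in
     FAll y (FIff (FMem y p) (FOr (fm_upair y a a) (fm_upair y a b))))"

lemma sat_fm_pair [simp]: "sat mem env (fm_pair p a b) \<longleftrightarrow> m_pair mem (env p) (env a) (env b)"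
  by (simp add: fm_pair_def m_pair_def Let_def)

definition fm_succ :: "nat \<Rightarrow> nat \<Rightarrow> fm" where
  "fm_succ s x = (let y = fresh [s, x] 0 in FAll y (FIff (FMem y s) (FOr (FMem y x) (FEq y x))))"

lemma sat_fm_succ [simp]: "sat mem env (fm_succ s x) \<longleftrightarrow> m_succ mem (env s) (env x)"
  by (simp add: fm_succ_def m_succ_def Let_def)

definition fm_inductive :: "nat \<Rightarrow> fm" where
  "fm_inductive w = (let x = fresh [w] 0; s = fresh [w] 1 in
     FAnd (FEx x (FAnd (FMem x w) (fm_empty x)))
          (FAll x (FImp (FMem x w) (FEx s (FAnd (FMem s w) (fm_succ s x))))))"

lemma sat_fm_inductive [simp]: "sat mem env (fm_inductive w) \<longleftrightarrow> m_inductive mem (env w)"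
  by (simp add: fm_inductive_def m_inductive_def Let_def)

definition fm_omega :: "nat \<Rightarrow> fm" where
  "fm_omega w = (let z = fresh [w] 0 in
     FAnd (fm_inductive w) (FAll z (FImp (fm_inductive z) (fm_subset w z))))"

lemma sat_fm_omega [simp]: "sat mem env (fm_omega w) \<longleftrightarrow> m_omega mem (env w)"
  by (simp add: fm_omega_def m_omega_def Let_def)

definition fm_edge :: "nat \<Rightarrow> nat \<Rightarrow> nat \<Rightarrow> fm" where
  "fm_edge A a b = (let p = fresh [A, a, b] 0 in FEx p (FAnd (FMem p A) (fm_pair p a b)))"

lemma sat_fm_edge [simp]: "sat mem env (fm_edge A a b) \<longleftrightarrow> m_edge mem (env A) (env a) (env b)"
  by (simp add: fm_edge_def m_edge_def Let_def)

definition fm_fld :: "nat \<Rightarrow> nat \<Rightarrow> fm" where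
  "fm_fld A x = (let y = fresh [A, x] 0 in FEx y (FOr (fm_edge A x y) (fm_edge A y x)))"

lemma sat_fm_fld [simp]: "sat mem env (fm_fld A x) \<longleftrightarrow> m_fld mem (env A) (env x)"
  by (simp add: fm_fld_def m_fld_def Let_def)

definition fm_rel :: "nat \<Rightarrow> fm" where
  "fm_rel c = (let p = fresh [c] 0; a = fresh [c] 1; b = fresh [c] 2 in
     FAll p (FImp (FMem p c) (FEx a (FEx b (fm_pair p a b)))))"

lemma sat_fm_rel [simp]: "sat mem env (fm_rel c) \<longleftrightarrow> m_rel mem (env c)"
  by (simp add: fm_rel_def m_rel_def Let_def)

definition fm_fun :: "nat \<Rightarrow> fm" where
  "fm_fun c = (let x = fresh [c] 0; y = fresh [c] 1; y' = fresh [c] 2 in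
     FAnd (fm_rel c) (FAll x (FAll y (FAll y'
       (FImp (FAnd (fm_edge c x y) (fm_edge c x y')) (FEq y y'))))))"

lemma sat_fm_fun [simp]: "sat mem env (fm_fun c) \<longleftrightarrow> m_fun mem (env c)"
  by (simp add: fm_fun_def m_fun_def Let_def)

definition fm_dom :: "nat \<Rightarrow> nat \<Rightarrow> fm" where
  "fm_dom c K = (let x = fresh [c, K] 0; y = fresh [c, K] 1 in
     FAll x (FIff (FEx y (fm_edge c x y)) (FMem x K)))"

lemma sat_fm_dom [simp]: "sat mem env (fm_dom c K) \<longleftrightarrow> m_dom mem (env c) (env K)"
  by (simp add: fm_dom_def m_dom_def Let_def)

definition fm_chain :: "nat \<Rightarrow> nat \<Rightarrow> nat \<Rightarrow> fm" where
  "fm_chain A j v = (let t = fresh [A, j, v]; w = t 0; K = t 1; K1 = t 2; c = t 3; e = t 4;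
       i = t 5; i1 = t 6; a = t 7; b = t 8 in
     FEx w (FEx K (FEx K1 (FEx c (FEx e
       (FAnd (fm_omega w) (FAnd (FMem K w) (FAnd (fm_succ K1 K) (FAnd (fm_empty e)
       (FAnd (fm_fun c) (FAnd (fm_dom c K1) (FAnd (fm_edge c e j) (FAnd (fm_edge c K v)
       (FAll i (FAll i1 (FAll a (FAll b
         (FImp (FAnd (FMem i K) (FAnd (fm_succ i1 i) (FAnd (fm_edge c i a) (fm_edge c i1 b))))
               (fm_edge A a b)))))))))))))))))))"

lemma sat_fm_chain [simp]: "sat mem env (fm_chain A j v) \<longleftrightarrow> m_chain mem (env A) (env j) (env v)"
  by (simp add: fm_chain_def m_chain_def Let_def)

section \<open>Set theory in a model\<close>

locale Z_FTM_model =
  fixes mem :: "'a \<Rightarrow> 'a \<Rightarrow> bool" (infix "\<in>\<^sub>m" 50)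
  assumes axioms: "Z_FTM_omega mem"
begin

lemma extensionality:
  assumes "\<And>z. z \<in>\<^sub>m x \<longleftrightarrow> z \<in>\<^sub>m y"
  shows "x = y"
proof -
  have "\<forall>x y. (\<forall>z. z \<in>\<^sub>m x \<longleftrightarrow> z \<in>\<^sub>m y) \<longrightarrow> x = y"
    using axioms unfolding Z_FTM_omega_def by (rule conjunct1)
  then show ?thesis using assms by blast
qed

lemma ex_upair: "\<exists>z. m_upair mem z a b"
  using axioms unfolding Z_FTM_omega_def by blast

lemma ex_Union: "\<exists>u. \<forall>y. y \<in>\<^sub>m u \<longleftrightarrow> (\<exists>z. z \<in>\<^sub>m x \<and> y \<in>\<^sub>m z)"
  using axioms unfolding Z_FTM_omega_def by blast

lemma ex_inductive: "\<exists>w. m_inductive mem w"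
  using axioms unfolding Z_FTM_omega_def by blast

lemma foundation: "y \<in>\<^sub>m x \<Longrightarrow> \<exists>y. y \<in>\<^sub>m x \<and> (\<forall>z. z \<in>\<^sub>m y \<longrightarrow> \<not> z \<in>\<^sub>m x)"
  using axioms unfolding Z_FTM_omega_def by blast

lemma separation:
  assumes "\<And>y. sat mem (env(i := y)) \<phi> \<longleftrightarrow> P y"
  shows "\<exists>b. \<forall>y. y \<in>\<^sub>m b \<longleftrightarrow> y \<in>\<^sub>m a \<and> P y"
proof -
  have "\<exists>b. \<forall>y. y \<in>\<^sub>m b \<longleftrightarrow> y \<in>\<^sub>m a \<and> sat mem (env(i := y)) \<phi>"
    using axioms unfolding Z_FTM_omega_def by blast
  then show ?thesis using assms by simp
qed

lemma finite_closure: "\<exists>Y. m_subset mem X Y \<and> (\<forall>F. m_subset mem F Y \<and> m_finite mem F \<longrightarrow> F \<in>\<^sub>m Y)"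
  using axioms unfolding Z_FTM_omega_def by blast

lemma ex_transitive_superset: "\<exists>T. m_subset mem X T \<and> m_transitive mem T"
  using axioms unfolding Z_FTM_omega_def by blast

lemma countable:
  "\<exists>w f. m_omega mem w \<and> m_fun mem f \<and> m_injective mem f \<and> m_dom mem f X \<and>
     (\<forall>y. (\<exists>x. m_edge mem f x y) \<longrightarrow> y \<in>\<^sub>m w)"
  using axioms unfolding Z_FTM_omega_def by blast

lemma ex_empty: "\<exists>e. m_empty mem e"
proof -
  obtain b where "\<forall>y. y \<in>\<^sub>m b \<longleftrightarrow> y \<in>\<^sub>m a \<and> False"
    using separation[of "\<lambda>_. a" 0 "FNeg (FEq 0 0)" "\<lambda>_. False"] by force
  then show ?thesis by (auto simp: m_empty_def)
qed

lemma empty_unique: "m_empty mem x \<Longrightarrow> m_empty mem y \<Longrightarrow> x = y"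
  by (rule extensionality) (auto simp: m_empty_def)

lemma upair_unique: "m_upair mem s a b \<Longrightarrow> m_upair mem t a b \<Longrightarrow> s = t"
  by (rule extensionality) (auto simp: m_upair_def)

lemma ex_Un: "\<exists>u. \<forall>y. y \<in>\<^sub>m u \<longleftrightarrow> y \<in>\<^sub>m a \<or> y \<in>\<^sub>m b"
proof -
  obtain z where z: "m_upair mem z a b" using ex_upair by blast
  obtain u where "\<forall>y. y \<in>\<^sub>m u \<longleftrightarrow> (\<exists>x. x \<in>\<^sub>m z \<and> y \<in>\<^sub>m x)" using ex_Union by blast
  then show ?thesis using z by (auto simp: m_upair_def)
qed

lemma ex_succ: "\<exists>s. m_succ mem s x"
proof -
  obtain z where z: "m_upair mem z x x" using ex_upair by blast
  obtain u where "\<forall>y. y \<in>\<^sub>m u \<longleftrightarrow> y \<in>\<^sub>m x \<or> y \<in>\<^sub>m z" using ex_Un by blast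
  then show ?thesis using z by (auto simp: m_upair_def m_succ_def)
qed

lemma succ_unique: "m_succ mem s x \<Longrightarrow> m_succ mem t x \<Longrightarrow> s = t"
  by (rule extensionality) (auto simp: m_succ_def)

lemma succ_not_empty: "m_succ mem s x \<Longrightarrow> \<not> m_empty mem s"
  by (auto simp: m_succ_def m_empty_def)

lemma succ_inject:
  assumes "m_succ mem s a" "m_succ mem s b"
  shows "a = b"
proof (rule ccontr)
  assume "a \<noteq> b"
  then have ab: "a \<in>\<^sub>m b" "b \<in>\<^sub>m a" using assms unfolding m_succ_def by blast+
  obtain u where u: "m_upair mem u a b" using ex_upair by blast
  then have "a \<in>\<^sub>m u" by (simp add: m_upair_def)
  then obtain y where "y \<in>\<^sub>m u" "\<forall>z. z \<in>\<^sub>m y \<longrightarrow> \<not> z \<in>\<^sub>m u" using foundation by blast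
  then show False using u ab by (auto simp: m_upair_def)
qed

lemma pair_is_upair:
  assumes "m_pair mem p a b" "m_upair mem u1 a a" "m_upair mem u2 a b"
  shows "m_upair mem p u1 u2"
  using assms upair_unique unfolding m_pair_def m_upair_def[of mem p] by metis

lemma ex_pair: "\<exists>p. m_pair mem p a b"
proof -
  obtain u1 where u1: "m_upair mem u1 a a" using ex_upair by blast
  obtain u2 where u2: "m_upair mem u2 a b" using ex_upair by blast
  obtain p where p: "m_upair mem p u1 u2" using ex_upair by blast
  have "m_pair mem p a b"
    unfolding m_pair_def using p u1 u2 upair_unique unfolding m_upair_def[of mem p] by metis
  then show ?thesis by blast
qed

lemma pair_inject:
  assumes "m_pair mem p a b" "m_pair mem p a' b'"
  shows "a = a' \<and> b = b'"
proof -
  obtain u1 where u1: "m_upair mem u1 a a" using ex_upair by blast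
  obtain u2 where u2: "m_upair mem u2 a b" using ex_upair by blast
  obtain v2 where v2: "m_upair mem v2 a b'" using ex_upair by blast
  have "u1 \<in>\<^sub>m p" using assms(1) u1 by (auto simp: m_pair_def)
  then have "m_upair mem u1 a' a' \<or> m_upair mem u1 a' b'" using assms(2) by (auto simp: m_pair_def)
  then have a: "a' = a" using u1 by (auto simp: m_upair_def)
  have "u2 \<in>\<^sub>m p" using assms(1) u2 by (auto simp: m_pair_def)
  then have u2_cases: "m_upair mem u2 a a \<or> m_upair mem u2 a b'"
    using assms(2) a by (auto simp: m_pair_def)
  have "v2 \<in>\<^sub>m p" using assms(2) v2 a by (auto simp: m_pair_def)
  then have v2_cases: "m_upair mem v2 a a \<or> m_upair mem v2 a b" using assms(1) by (auto simp: m_pair_def)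
  have "b = b'"
  proof (cases "b = a")
    case True
    with v2_cases v2 show ?thesis unfolding m_upair_def by metis
  next
    case False
    with u2_cases u2 show ?thesis unfolding m_upair_def by metis
  qed
  with a show ?thesis by simp
qed

section \<open>The natural numbers\<close>

lemma ex_omega: "\<exists>w. m_omega mem w"
proof -
  obtain w0 where w0: "m_inductive mem w0" using ex_inductive by blast
  obtain w where w: "\<forall>y. y \<in>\<^sub>m w \<longleftrightarrow> y \<in>\<^sub>m w0 \<and> (\<forall>z. m_inductive mem z \<longrightarrow> y \<in>\<^sub>m z)"
    using separation[of "\<lambda>_. w0" 0 "FAll 1 (FImp (fm_inductive 1) (FMem 0 1))"] by force
  have "m_inductive mem w"
    unfolding m_inductive_def
  proof
    obtain e where e: "e \<in>\<^sub>m w0" "m_empty mem e" using w0 unfolding m_inductive_def by blast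
    then have "\<forall>z. m_inductive mem z \<longrightarrow> e \<in>\<^sub>m z"
      using empty_unique unfolding m_inductive_def by blast
    then show "\<exists>e. e \<in>\<^sub>m w \<and> m_empty mem e" using e w by blast
    show "\<forall>x. x \<in>\<^sub>m w \<longrightarrow> (\<exists>s. s \<in>\<^sub>m w \<and> m_succ mem s x)"
    proof (intro allI impI)
      fix x assume x: "x \<in>\<^sub>m w"
      then obtain s where s: "s \<in>\<^sub>m w0" "m_succ mem s x" using w w0 unfolding m_inductive_def by blast
      have "s \<in>\<^sub>m z" if z: "m_inductive mem z" for z
      proof -
        have "x \<in>\<^sub>m z" using x w z by blast
        then obtain s' where "s' \<in>\<^sub>m z" "m_succ mem s' x" using z unfolding m_inductive_def by blast
        then show ?thesis using s(2) succ_unique by blast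
      qed
      then show "\<exists>s. s \<in>\<^sub>m w \<and> m_succ mem s x" using s w by blast
    qed
  qed
  moreover have "\<forall>z. m_inductive mem z \<longrightarrow> m_subset mem w z" using w by (auto simp: m_subset_def)
  ultimately show ?thesis unfolding m_omega_def by blast
qed

lemma omega_zero: "m_omega mem w \<Longrightarrow> m_empty mem e \<Longrightarrow> e \<in>\<^sub>m w"
  unfolding m_omega_def m_inductive_def by (metis empty_unique)

lemma omega_succ: "m_omega mem w \<Longrightarrow> x \<in>\<^sub>m w \<Longrightarrow> m_succ mem s x \<Longrightarrow> s \<in>\<^sub>m w"
  unfolding m_omega_def m_inductive_def by (metis succ_unique)

lemma omega_induct [consumes 2, case_names definable zero succ]:
  assumes w: "m_omega mem w" and n: "n \<in>\<^sub>m w"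
    and definable: "\<And>y. sat mem (env(i := y)) \<phi> \<longleftrightarrow> P y"
    and zero: "\<And>e. m_empty mem e \<Longrightarrow> P e"
    and succ: "\<And>x s. x \<in>\<^sub>m w \<Longrightarrow> P x \<Longrightarrow> m_succ mem s x \<Longrightarrow> P s"
  shows "P n"
proof -
  obtain b where b: "\<forall>y. y \<in>\<^sub>m b \<longleftrightarrow> y \<in>\<^sub>m w \<and> P y" using separation[OF definable] by blast
  have "m_inductive mem b"
    unfolding m_inductive_def
  proof
    show "\<exists>e. e \<in>\<^sub>m b \<and> m_empty mem e" using ex_empty b zero omega_zero[OF w] by blast
    show "\<forall>x. x \<in>\<^sub>m b \<longrightarrow> (\<exists>s. s \<in>\<^sub>m b \<and> m_succ mem s x)"
      using b succ omega_succ[OF w] ex_succ by meson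
  qed
  then have "m_subset mem w b" using w unfolding m_omega_def by blast
  then show ?thesis using n b unfolding m_subset_def by blast
qed

lemma omega_transitive:
  assumes w: "m_omega mem w"
  shows "m_transitive mem w"
proof -
  have "m_subset mem n w" if "n \<in>\<^sub>m w" for n
    using w that
  proof (induction n rule: omega_induct[where env = "\<lambda>_. w" and i = 0 and \<phi> = "fm_subset 0 1"])
    case definable show ?case by simp
  next
    case zero then show ?case by (simp add: m_empty_def m_subset_def)
  next
    case succ then show ?case by (auto simp: m_succ_def m_subset_def)
  qed
  then show ?thesis unfolding m_transitive_def m_subset_def by blast
qed

lemma omega_elem_transitive:
  assumes w: "m_omega mem w" and n: "n \<in>\<^sub>m w"
  shows "m_transitive mem n"
  using w n unfolding m_transitive_def
proof (induction n rule: omega_induct[where env = "\<lambda>_. w" and i = 0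
      and \<phi> = "fm_transitive 0"])
  case definable show ?case by (simp add: m_transitive_def)
next
  case zero then show ?case by (simp add: m_empty_def)
next
  case succ then show ?case unfolding m_succ_def by metis
qed

lemma omega_cases:
  assumes w: "m_omega mem w" and n: "n \<in>\<^sub>m w"
  shows "m_empty mem n \<or> (\<exists>m. m \<in>\<^sub>m w \<and> m_succ mem n m)"
  using w n
proof (induction n rule: omega_induct[where env = "\<lambda>_. w" and i = 0
      and \<phi> = "FOr (fm_empty 0) (FEx 2 (FAnd (FMem 2 1) (fm_succ 0 2)))"])
  case definable show ?case by simp
qed blast+

lemma omega_zero_mem:
  assumes w: "m_omega mem w" and n: "n \<in>\<^sub>m w"
  shows "m_empty mem n \<or> (\<exists>e. e \<in>\<^sub>m n \<and> m_empty mem e)"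
  using w n
proof (induction n rule: omega_induct[where env = "\<lambda>_. w" and i = 0
      and \<phi> = "FOr (fm_empty 0) (FEx 2 (FAnd (FMem 2 0) (fm_empty 2)))"])
  case definable show ?case by simp
next
  case zero then show ?case by blast
next
  case succ then show ?case by (auto simp: m_succ_def)
qed

lemma omega_succ_mono:
  assumes w: "m_omega mem w" and n: "n \<in>\<^sub>m w"
    and "i \<in>\<^sub>m n" "m_succ mem s i" "m_succ mem t n"
  shows "s \<in>\<^sub>m t"
proof -
  have "\<forall>i s t. i \<in>\<^sub>m n \<longrightarrow> m_succ mem s i \<longrightarrow> m_succ mem t n \<longrightarrow> s \<in>\<^sub>m t"
    using w n
  proof (induction n rule: omega_induct[where env = "\<lambda>_. w" and i = 0
        and \<phi> = "FAll 1 (FAll 2 (FAll 3 (FImp (FMem 1 0)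
                  (FImp (fm_succ 2 1) (FImp (fm_succ 3 0) (FMem 2 3))))))"])
    case definable show ?case by simp
  next
    case zero then show ?case by (simp add: m_empty_def)
  next
    case (succ x s)
    show ?case
    proof (intro allI impI)
      fix i s' t
      assume i: "i \<in>\<^sub>m s" and s': "m_succ mem s' i" and t: "m_succ mem t s"
      from i \<open>m_succ mem s x\<close> have "i \<in>\<^sub>m x \<or> i = x" by (simp add: m_succ_def)
      then have "s' \<in>\<^sub>m s \<or> s' = s"
        using succ s' succ_unique by blast
      then show "s' \<in>\<^sub>m t" using t by (auto simp: m_succ_def)
    qed
  qed
  then show ?thesis using assms by blast
qed

lemma omega_mem_succ_iff:
  assumes w: "m_omega mem w" and n: "n \<in>\<^sub>m w" and n': "m_succ mem n' n"
  shows "x \<in>\<^sub>m n' \<longleftrightarrow> m_empty mem x \<or> (\<exists>i. i \<in>\<^sub>m n \<and> m_succ mem x i)"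
proof
  have n'w: "n' \<in>\<^sub>m w" using omega_succ[OF w n n'] .
  assume x: "x \<in>\<^sub>m n'"
  then have "x \<in>\<^sub>m w" using omega_transitive[OF w] n'w unfolding m_transitive_def by blast
  from omega_cases[OF w this] show "m_empty mem x \<or> (\<exists>i. i \<in>\<^sub>m n \<and> m_succ mem x i)"
  proof
    assume "m_empty mem x"
    then show ?thesis ..
  next
    assume "\<exists>m. m \<in>\<^sub>m w \<and> m_succ mem x m"
    then obtain m where m: "m_succ mem x m" by blast
    have "x \<in>\<^sub>m n \<or> x = n" using x n' by (simp add: m_succ_def)
    then have "m \<in>\<^sub>m n"
      using m omega_elem_transitive[OF w n] unfolding m_succ_def m_transitive_def by blast
    then show ?thesis using m by blast
  qed
next
  have n'w: "n' \<in>\<^sub>m w" using omega_succ[OF w n n'] .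
  assume "m_empty mem x \<or> (\<exists>i. i \<in>\<^sub>m n \<and> m_succ mem x i)"
  then show "x \<in>\<^sub>m n'"
  proof
    assume "m_empty mem x"
    then show ?thesis using omega_zero_mem[OF w n'w] succ_not_empty[OF n'] empty_unique by blast
  next
    assume "\<exists>i. i \<in>\<^sub>m n \<and> m_succ mem x i"
    then show ?thesis using omega_succ_mono[OF w n _ _ n'] by blast
  qed
qed

section \<open>Relations and sequences\<close>

lemma
  assumes "m_upair mem g p q" "m_pair mem p x1 y1" "m_pair mem q x2 y2"
  shows rel_upair_pairs: "m_rel mem g"
    and edge_upair_pairs: "m_edge mem g x y \<longleftrightarrow> (x = x1 \<and> y = y1) \<or> (x = x2 \<and> y = y2)"
proof -
  show "m_rel mem g" using assms by (auto simp: m_rel_def m_upair_def)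
  show "m_edge mem g x y \<longleftrightarrow> (x = x1 \<and> y = y1) \<or> (x = x2 \<and> y = y2)"
  proof
    assume "m_edge mem g x y"
    then obtain r where r: "r \<in>\<^sub>m g" "m_pair mem r x y" by (auto simp: m_edge_def)
    then have "r = p \<or> r = q" using assms(1) by (auto simp: m_upair_def)
    then show "(x = x1 \<and> y = y1) \<or> (x = x2 \<and> y = y2)" using r(2) assms(2,3) pair_inject by blast
  next
    assume "(x = x1 \<and> y = y1) \<or> (x = x2 \<and> y = y2)"
    then show "m_edge mem g x y" using assms by (auto simp: m_edge_def m_upair_def)
  qed
qed

lemma upair_finite:
  assumes z: "m_upair mem z a b"
  shows "m_finite mem z"
proof -
  obtain w where w: "m_omega mem w" using ex_omega by blast
  obtain e where e: "m_empty mem e" using ex_empty by blast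
  obtain one where one: "m_succ mem one e" using ex_succ by blast
  obtain two where two: "m_succ mem two one" using ex_succ by blast
  have one_w: "one \<in>\<^sub>m w" using omega_succ[OF w omega_zero[OF w e] one] .
  have two_w: "two \<in>\<^sub>m w" using omega_succ[OF w one_w two] .
  have "one \<noteq> e" using one e succ_not_empty by blast
  obtain p0 where p0: "m_pair mem p0 e a" using ex_pair by blast
  obtain p1 where p1: "m_pair mem p1 one b" using ex_pair by blast
  show ?thesis
  proof (cases "a = b")
    case True
    obtain g where g: "m_upair mem g p0 p0" using ex_upair by blast
    note E = edge_upair_pairs[OF g p0 p0]
    have "m_fun mem g" "m_injective mem g"
      unfolding m_fun_def m_injective_def using rel_upair_pairs[OF g p0 p0] E by simp_all
    moreover have "m_dom mem g one" "m_ran mem g z"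
      unfolding m_dom_def m_ran_def using E one e z True by (auto simp: m_succ_def m_empty_def m_upair_def)
    ultimately show ?thesis unfolding m_finite_def using w one_w by blast
  next
    case False
    obtain g where g: "m_upair mem g p0 p1" using ex_upair by blast
    note E = edge_upair_pairs[OF g p0 p1]
    have "m_fun mem g" "m_injective mem g"
      unfolding m_fun_def m_injective_def
      using rel_upair_pairs[OF g p0 p1] E \<open>one \<noteq> e\<close> False by auto
    moreover have "m_dom mem g two" "m_ran mem g z"
      unfolding m_dom_def m_ran_def using E one two e z by (auto simp: m_succ_def m_empty_def m_upair_def)
    ultimately show ?thesis unfolding m_finite_def using w two_w by blast
  qed
qed

text \<open>Without Power Set there is no set \<open>W \<times> W\<close>; FC supplies a set closed under pairing instead.\<close>

lemma ex_pair_closed_superset: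
  "\<exists>W. m_subset mem U W \<and> (\<forall>a b p. a \<in>\<^sub>m W \<longrightarrow> b \<in>\<^sub>m W \<longrightarrow> m_pair mem p a b \<longrightarrow> p \<in>\<^sub>m W)"
proof -
  obtain W where W: "m_subset mem U W" "\<forall>F. m_subset mem F W \<and> m_finite mem F \<longrightarrow> F \<in>\<^sub>m W"
    using finite_closure by blast
  have upair_closed: "z \<in>\<^sub>m W" if "a \<in>\<^sub>m W" "b \<in>\<^sub>m W" "m_upair mem z a b" for a b z
  proof -
    have "m_subset mem z W" using that by (auto simp: m_subset_def m_upair_def)
    then show ?thesis using W(2) upair_finite[OF that(3)] by blast
  qed
  have "p \<in>\<^sub>m W" if ab: "a \<in>\<^sub>m W" "b \<in>\<^sub>m W" and p: "m_pair mem p a b" for a b p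
  proof -
    obtain u1 where u1: "m_upair mem u1 a a" using ex_upair by blast
    obtain u2 where u2: "m_upair mem u2 a b" using ex_upair by blast
    show ?thesis
      using upair_closed[OF upair_closed[OF ab(1,1) u1] upair_closed[OF ab u2] pair_is_upair[OF p u1 u2]] .
  qed
  then show ?thesis using W(1) by blast
qed

lemma ex_components: "\<exists>C. \<forall>p a b. p \<in>\<^sub>m c \<longrightarrow> m_pair mem p a b \<longrightarrow> a \<in>\<^sub>m C \<and> b \<in>\<^sub>m C"
proof -
  obtain U where U: "\<forall>y. y \<in>\<^sub>m U \<longleftrightarrow> (\<exists>z. z \<in>\<^sub>m c \<and> y \<in>\<^sub>m z)" using ex_Union by blast
  obtain C where C: "\<forall>y. y \<in>\<^sub>m C \<longleftrightarrow> (\<exists>z. z \<in>\<^sub>m U \<and> y \<in>\<^sub>m z)" using ex_Union by blast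
  have "a \<in>\<^sub>m C \<and> b \<in>\<^sub>m C" if "p \<in>\<^sub>m c" "m_pair mem p a b" for p a b
  proof -
    obtain u where u: "m_upair mem u a b" using ex_upair by blast
    then have "u \<in>\<^sub>m p" using that(2) by (simp add: m_pair_def)
    then show ?thesis using u U C that(1) by (auto simp: m_upair_def)
  qed
  then show ?thesis by blast
qed

text \<open>In \<open>\<phi>\<close> the related elements are the variables \<open>1, 2\<close>; variable \<open>0\<close> is the one bound by the
  separation, so \<open>\<phi>\<close> must not depend on it.\<close>

lemma relation_comprehension:
  assumes field: "\<And>x y. R x y \<Longrightarrow> x \<in>\<^sub>m U \<and> y \<in>\<^sub>m U"
    and definable: "\<And>p x y. sat mem (env(0 := p, 1 := x, 2 := y)) \<phi> \<longleftrightarrow> R x y"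
  shows "\<exists>G. (\<forall>p. p \<in>\<^sub>m G \<longrightarrow> (\<exists>x y. m_pair mem p x y \<and> R x y)) \<and>
             (\<forall>x y. m_edge mem G x y \<longleftrightarrow> R x y)"
proof -
  obtain W where W: "m_subset mem U W"
    and pair_closed: "\<forall>a b p. a \<in>\<^sub>m W \<longrightarrow> b \<in>\<^sub>m W \<longrightarrow> m_pair mem p a b \<longrightarrow> p \<in>\<^sub>m W"
    using ex_pair_closed_superset by blast
  have "\<exists>G. \<forall>p. p \<in>\<^sub>m G \<longleftrightarrow> p \<in>\<^sub>m W \<and> (\<exists>x y. m_pair mem p x y \<and> R x y)"
    by (rule separation[of env 0 "FEx 1 (FEx 2 (FAnd (fm_pair 0 1 2) \<phi>))"]) (use definable[simplified] in simp)
  then obtain G where G: "\<forall>p. p \<in>\<^sub>m G \<longleftrightarrow> p \<in>\<^sub>m W \<and> (\<exists>x y. m_pair mem p x y \<and> R x y)" ..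
  have "m_edge mem G x y \<longleftrightarrow> R x y" for x y
  proof
    assume "m_edge mem G x y"
    then obtain p x' y' where "m_pair mem p x y" "m_pair mem p x' y'" "R x' y'"
      using G unfolding m_edge_def by blast
    then show "R x y" using pair_inject by blast
  next
    assume xy: "R x y"
    obtain p where "m_pair mem p x y" using ex_pair by blast
    moreover have "p \<in>\<^sub>m W" using calculation field[OF xy] W pair_closed by (auto simp: m_subset_def)
    ultimately show "m_edge mem G x y" using G xy unfolding m_edge_def by blast
  qed
  then show ?thesis using G by blast
qed

lemma empty_no_edge: "m_empty mem e \<Longrightarrow> \<not> m_edge mem e x y"
  by (auto simp: m_empty_def m_edge_def)

lemma empty_fun: "m_empty mem e \<Longrightarrow> m_fun mem e \<and> m_dom mem e e"
  by (auto simp: m_fun_def m_rel_def m_dom_def m_empty_def m_edge_def)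

text \<open>A sequence of length \<open>n\<close> is a function with domain \<open>n\<close>; \<open>c'\<close> below is \<open>z, c(0), c(1), \<dots>\<close>.\<close>

lemma ex_cons_graph:
  assumes w: "m_omega mem w" and n: "n \<in>\<^sub>m w" and c: "m_dom mem c n"
  shows "\<exists>c'. (\<forall>p. p \<in>\<^sub>m c' \<longrightarrow> (\<exists>x y. m_pair mem p x y)) \<and>
           (\<forall>x y. m_edge mem c' x y \<longleftrightarrow> (m_empty mem x \<and> y = z) \<or> (\<exists>i. m_edge mem c i y \<and> m_succ mem x i))"
proof -
  define R where "R x y \<longleftrightarrow> (m_empty mem x \<and> y = z) \<or> (\<exists>i. m_edge mem c i y \<and> m_succ mem x i)" for x y
  obtain n' where n': "m_succ mem n' n" using ex_succ by blast
  obtain C where C: "\<forall>p a b. p \<in>\<^sub>m c \<longrightarrow> m_pair mem p a b \<longrightarrow> a \<in>\<^sub>m C \<and> b \<in>\<^sub>m C"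
    using ex_components by blast
  obtain Z where Z: "m_upair mem Z z z" using ex_upair by blast
  obtain U0 where U0: "\<forall>y. y \<in>\<^sub>m U0 \<longleftrightarrow> y \<in>\<^sub>m C \<or> y \<in>\<^sub>m Z" using ex_Un by blast
  obtain U where U: "\<forall>y. y \<in>\<^sub>m U \<longleftrightarrow> y \<in>\<^sub>m n' \<or> y \<in>\<^sub>m U0" using ex_Un by blast
  have "x \<in>\<^sub>m U \<and> y \<in>\<^sub>m U" if "R x y" for x y
  proof -
    from that consider "m_empty mem x" "y = z" | i where "m_edge mem c i y" "m_succ mem x i"
      unfolding R_def by blast
    then show ?thesis
    proof cases
      case 1
      then show ?thesis using omega_mem_succ_iff[OF w n n'] Z U0 U by (auto simp: m_upair_def)
    next
      case 2
      then have "i \<in>\<^sub>m n" using c unfolding m_dom_def by blast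
      then have "x \<in>\<^sub>m n'" using omega_mem_succ_iff[OF w n n'] 2 by blast
      moreover have "y \<in>\<^sub>m C" using 2(1) C unfolding m_edge_def by blast
      ultimately show ?thesis using U0 U by blast
    qed
  qed
  then have "\<exists>G. (\<forall>p. p \<in>\<^sub>m G \<longrightarrow> (\<exists>x y. m_pair mem p x y \<and> R x y)) \<and>
      (\<forall>x y. m_edge mem G x y \<longleftrightarrow> R x y)"
    by (rule relation_comprehension[of R U "\<lambda>k. if k = 3 then z else c"
          "FOr (FAnd (fm_empty 1) (FEq 2 3)) (FEx 5 (FAnd (fm_edge 4 5 2) (fm_succ 1 5)))"])
      (auto simp: R_def)
  then show ?thesis unfolding R_def by blast
qed

lemma ex_cons_sequence:
  assumes w: "m_omega mem w" and n: "n \<in>\<^sub>m w" and n': "m_succ mem n' n"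
    and c: "m_fun mem c" "m_dom mem c n"
  shows "\<exists>c'. m_fun mem c' \<and> m_dom mem c' n' \<and>
           (\<forall>x y. m_edge mem c' x y \<longleftrightarrow> (m_empty mem x \<and> y = z) \<or> (\<exists>i. m_edge mem c i y \<and> m_succ mem x i))"
proof -
  obtain c' where c'_rel: "\<forall>p. p \<in>\<^sub>m c' \<longrightarrow> (\<exists>x y. m_pair mem p x y)"
    and c': "\<And>x y. m_edge mem c' x y \<longleftrightarrow> (m_empty mem x \<and> y = z) \<or> (\<exists>i. m_edge mem c i y \<and> m_succ mem x i)"
    using ex_cons_graph[OF w n c(2)] by blast
  have "m_fun mem c'"
    unfolding m_fun_def m_rel_def
  proof (intro conjI allI impI)
    show "\<exists>a b. m_pair mem p a b" if "p \<in>\<^sub>m c'" for p using c'_rel that by blast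
    fix x y y' assume xy: "m_edge mem c' x y \<and> m_edge mem c' x y'"
    show "y = y'"
    proof (cases "m_empty mem x")
      case True
      then show ?thesis using xy c'[of x y] c'[of x y'] succ_not_empty by blast
    next
      case False
      then obtain i i' where "m_edge mem c i y" "m_succ mem x i" "m_edge mem c i' y'" "m_succ mem x i'"
        using xy c'[of x y] c'[of x y'] by blast
      moreover have "i = i'" using calculation succ_inject by blast
      ultimately show ?thesis using c(1) unfolding m_fun_def by blast
    qed
  qed
  moreover have "m_dom mem c' n'"
    unfolding m_dom_def
  proof
    fix x
    have "(\<exists>y. m_edge mem c' x y) \<longleftrightarrow> m_empty mem x \<or> (\<exists>i. i \<in>\<^sub>m n \<and> m_succ mem x i)"
      using c' c(2) unfolding m_dom_def by blast
    then show "(\<exists>y. m_edge mem c' x y) \<longleftrightarrow> x \<in>\<^sub>m n'" using omega_mem_succ_iff[OF w n n'] by simp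
  qed
  ultimately show ?thesis using c' by blast
qed

section \<open>Chains\<close>

lemma chain_refl: "m_chain mem A j j"
proof -
  obtain w where w: "m_omega mem w" using ex_omega by blast
  obtain e where e: "m_empty mem e" using ex_empty by blast
  obtain one where one: "m_succ mem one e" using ex_succ by blast
  have "e \<in>\<^sub>m w" using omega_zero[OF w e] .
  then obtain c where "m_fun mem c" "m_dom mem c one"
      and c: "\<forall>x y. m_edge mem c x y \<longleftrightarrow> (m_empty mem x \<and> y = j) \<or> (\<exists>i. m_edge mem e i y \<and> m_succ mem x i)"
    using ex_cons_sequence[OF w _ one] empty_fun[OF e] by blast
  moreover have "m_edge mem c e j" using c e by blast
  ultimately show ?thesis
    unfolding m_chain_def using w \<open>e \<in>\<^sub>m w\<close> one e e[unfolded m_empty_def] by blast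
qed

lemma chain_prepend:
  assumes "m_chain mem A j v" and zj: "m_edge mem A z j"
  shows "m_chain mem A z v"
proof -
  obtain w K K1 c e where w: "m_omega mem w" and K: "K \<in>\<^sub>m w" "m_succ mem K1 K"
    and e: "m_empty mem e" and c: "m_fun mem c" "m_dom mem c K1" "m_edge mem c e j" "m_edge mem c K v"
    and steps: "\<And>i i1 a b. i \<in>\<^sub>m K \<Longrightarrow> m_succ mem i1 i \<Longrightarrow> m_edge mem c i a \<Longrightarrow> m_edge mem c i1 b
                  \<Longrightarrow> m_edge mem A a b"
    using assms(1) unfolding m_chain_def by blast
  have K1: "K1 \<in>\<^sub>m w" using omega_succ[OF w K] .
  obtain K2 where K2: "m_succ mem K2 K1" using ex_succ by blast
  obtain c' where c': "m_fun mem c'" "m_dom mem c' K2"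
      and c'_edge: "\<forall>x y. m_edge mem c' x y \<longleftrightarrow> (m_empty mem x \<and> y = z) \<or> (\<exists>i. m_edge mem c i y \<and> m_succ mem x i)"
    using ex_cons_sequence[OF w K1 K2 c(1,2)] by blast
  have c_single: "m_edge mem c i a \<Longrightarrow> m_edge mem c i b \<Longrightarrow> a = b" for i a b
    using c(1) unfolding m_fun_def by blast
  have steps': "m_edge mem A a b"
    if i: "i \<in>\<^sub>m K1" and i1: "m_succ mem i1 i" and a: "m_edge mem c' i a" and b: "m_edge mem c' i1 b"
    for i i1 a b
  proof -
    obtain i' where "m_edge mem c i' b" "m_succ mem i1 i'"
      using b i1 c'_edge succ_not_empty by blast
    then have ib: "m_edge mem c i b" using i1 succ_inject by blast
    from a c'_edge consider "m_empty mem i" "a = z" | i0 where "m_edge mem c i0 a" "m_succ mem i i0"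
      by blast
    then show ?thesis
    proof cases
      case 1
      then show ?thesis using ib c(3) c_single e empty_unique zj by blast
    next
      case 2
      then have "\<not> m_empty mem i" using succ_not_empty by blast
      then obtain i0' where "i0' \<in>\<^sub>m K" "m_succ mem i i0'" using i omega_mem_succ_iff[OF w K] by blast
      then have "i0 \<in>\<^sub>m K" using 2 succ_inject by blast
      then show ?thesis using steps 2 ib by blast
    qed
  qed
  have "m_edge mem c' e z" "m_edge mem c' K1 v" using c'_edge e K(2) c(4) by blast+
  then show ?thesis unfolding m_chain_def using w K1 K2 e c' steps' by blast
qed

lemma chain_support:
  assumes "m_chain mem A j v"
  shows "\<exists>R. j \<in>\<^sub>m R \<and> v \<in>\<^sub>m R \<and> (\<forall>a. a \<in>\<^sub>m R \<longrightarrow> a = j \<or> (\<exists>b. b \<in>\<^sub>m R \<and> m_edge mem A b a))"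
proof -
  obtain w K K1 c e where w: "m_omega mem w" and K: "K \<in>\<^sub>m w" "m_succ mem K1 K"
    and e: "m_empty mem e" and c: "m_fun mem c" "m_dom mem c K1" "m_edge mem c e j" "m_edge mem c K v"
    and steps: "\<And>i i1 a b. i \<in>\<^sub>m K \<Longrightarrow> m_succ mem i1 i \<Longrightarrow> m_edge mem c i a \<Longrightarrow> m_edge mem c i1 b
                  \<Longrightarrow> m_edge mem A a b"
    using assms unfolding m_chain_def by blast
  obtain C where C: "\<forall>p a b. p \<in>\<^sub>m c \<longrightarrow> m_pair mem p a b \<longrightarrow> a \<in>\<^sub>m C \<and> b \<in>\<^sub>m C"
    using ex_components by blast
  have "\<exists>R. \<forall>y. y \<in>\<^sub>m R \<longleftrightarrow> y \<in>\<^sub>m C \<and> (\<exists>i. m_edge mem c i y)"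
    by (rule separation[of "\<lambda>_. c" 0 "FEx 1 (fm_edge 2 1 0)"]) simp
  then obtain R where R: "\<forall>y. y \<in>\<^sub>m R \<longleftrightarrow> y \<in>\<^sub>m C \<and> (\<exists>i. m_edge mem c i y)" ..
  have in_R: "m_edge mem c i y \<Longrightarrow> y \<in>\<^sub>m R" for i y
    using R C unfolding m_edge_def by blast
  have "a = j \<or> (\<exists>b. b \<in>\<^sub>m R \<and> m_edge mem A b a)" if "a \<in>\<^sub>m R" for a
  proof -
    obtain i where a: "m_edge mem c i a" using R \<open>a \<in>\<^sub>m R\<close> by blast
    then have "i \<in>\<^sub>m K1" using c(2) unfolding m_dom_def by blast
    then consider "i = e" | i0 where "i0 \<in>\<^sub>m K" "m_succ mem i i0"
      using omega_mem_succ_iff[OF w K] e empty_unique by blast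
    then show ?thesis
    proof cases
      case 1
      then show ?thesis using a c(1,3) unfolding m_fun_def by blast
    next
      case 2
      then have "i0 \<in>\<^sub>m K1" using K(2) by (simp add: m_succ_def)
      then obtain b where b: "m_edge mem c i0 b" using c(2) unfolding m_dom_def by blast
      show ?thesis using steps[OF 2 b a] in_R[OF b] by blast
    qed
  qed
  then show ?thesis using in_R c(3,4) by blast
qed

text \<open>A minimal element of the union of the supports of chains \<open>u \<rightarrow> v\<close> and \<open>v \<rightarrow> u\<close> must be
  the start of both.\<close>

lemma vertex_unique:
  assumes wf: "m_wf mem A" and u: "m_is_vertex mem A u" and v: "m_is_vertex mem A v"
  shows "u = v"
proof -
  have fld: "m_fld mem A u" "m_fld mem A v" using u v unfolding m_is_vertex_def by blast+
  obtain R1 where R1: "u \<in>\<^sub>m R1" "v \<in>\<^sub>m R1" "\<forall>a. a \<in>\<^sub>m R1 \<longrightarrow> a = u \<or> (\<exists>b. b \<in>\<^sub>m R1 \<and> m_edge mem A b a)"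
    using chain_support v fld unfolding m_is_vertex_def by blast
  obtain R2 where R2: "v \<in>\<^sub>m R2" "u \<in>\<^sub>m R2" "\<forall>a. a \<in>\<^sub>m R2 \<longrightarrow> a = v \<or> (\<exists>b. b \<in>\<^sub>m R2 \<and> m_edge mem A b a)"
    using chain_support u fld unfolding m_is_vertex_def by blast
  obtain E where E: "\<forall>y. y \<in>\<^sub>m E \<longleftrightarrow> y \<in>\<^sub>m R1 \<or> y \<in>\<^sub>m R2" using ex_Un by blast
  have "\<forall>x. x \<in>\<^sub>m E \<longrightarrow> m_fld mem A x"
    using E R1(3) R2(3) fld unfolding m_fld_def by blast
  then obtain a where a: "a \<in>\<^sub>m E" "\<forall>j. j \<in>\<^sub>m E \<longrightarrow> \<not> m_edge mem A j a"
    using wf E R1(1) unfolding m_wf_def by blast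
  then consider "a \<in>\<^sub>m R1" | "a \<in>\<^sub>m R2" using E by blast
  then show ?thesis
  proof cases
    case 1
    then have "a = u" using R1(3) a(2) E by blast
    then show ?thesis using R2 a(2) E by blast
  next
    case 2
    then have "a = v" using R2(3) a(2) E by blast
    then show ?thesis using R1 a(2) E by blast
  qed
qed

section \<open>Coding the transitive closure of a set\<close>

lemma ex_transitive_closure:
  "\<exists>S. X \<in>\<^sub>m S \<and> m_transitive mem S \<and> (\<forall>Z. X \<in>\<^sub>m Z \<and> m_transitive mem Z \<longrightarrow> m_subset mem S Z)"
proof -
  obtain sX where sX: "m_upair mem sX X X" using ex_upair by blast
  obtain T where T: "m_subset mem sX T" "m_transitive mem T" using ex_transitive_superset by blast
  have "\<exists>S. \<forall>y. y \<in>\<^sub>m S \<longleftrightarrow> y \<in>\<^sub>m T \<and> (\<forall>Z. X \<in>\<^sub>m Z \<and> m_transitive mem Z \<longrightarrow> y \<in>\<^sub>m Z)"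
    by (rule separation[of "\<lambda>_. X" 0 "FAll 1 (FImp (FAnd (FMem 2 1) (fm_transitive 1)) (FMem 0 1))"])
      simp
  then obtain S where S: "\<forall>y. y \<in>\<^sub>m S \<longleftrightarrow> y \<in>\<^sub>m T \<and> (\<forall>Z. X \<in>\<^sub>m Z \<and> m_transitive mem Z \<longrightarrow> y \<in>\<^sub>m Z)" ..
  have "X \<in>\<^sub>m T" using sX T(1) unfolding m_upair_def m_subset_def by blast
  then have "X \<in>\<^sub>m S" using S by blast
  moreover have "m_transitive mem S"
    unfolding m_transitive_def
  proof (intro allI impI)
    fix y z assume yz: "y \<in>\<^sub>m S" "z \<in>\<^sub>m y"
    then have "z \<in>\<^sub>m T" using S T(2) unfolding m_transitive_def by blast
    moreover have "z \<in>\<^sub>m Z" if "X \<in>\<^sub>m Z \<and> m_transitive mem Z" for Z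
      using S yz that unfolding m_transitive_def by blast
    ultimately show "z \<in>\<^sub>m S" using S by blast
  qed
  moreover have "\<forall>Z. X \<in>\<^sub>m Z \<and> m_transitive mem Z \<longrightarrow> m_subset mem S Z"
    using S unfolding m_subset_def by blast
  ultimately show ?thesis by blast
qed

lemma ex_membership_code:
  assumes "\<forall>y. (\<exists>x. m_edge mem f x y) \<longrightarrow> y \<in>\<^sub>m w"
  shows "\<exists>A. (\<forall>p. p \<in>\<^sub>m A \<longrightarrow> (\<exists>a b. a \<in>\<^sub>m w \<and> b \<in>\<^sub>m w \<and> m_pair mem p a b)) \<and> m_rel mem A \<and>
           (\<forall>x y. m_edge mem A x y \<longleftrightarrow> (\<exists>a b. a \<in>\<^sub>m b \<and> m_edge mem f a x \<and> m_edge mem f b y))"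
proof -
  define R where "R x y \<longleftrightarrow> (\<exists>a b. a \<in>\<^sub>m b \<and> m_edge mem f a x \<and> m_edge mem f b y)" for x y
  have "\<exists>A. (\<forall>p. p \<in>\<^sub>m A \<longrightarrow> (\<exists>x y. m_pair mem p x y \<and> R x y)) \<and> (\<forall>x y. m_edge mem A x y \<longleftrightarrow> R x y)"
    by (rule relation_comprehension[of R w "\<lambda>_. f"
          "FEx 4 (FEx 5 (FAnd (FMem 4 5) (FAnd (fm_edge 3 4 1) (fm_edge 3 5 2))))"])
      (use assms in \<open>auto simp: R_def\<close>)
  then obtain A where A_pairs: "\<forall>p. p \<in>\<^sub>m A \<longrightarrow> (\<exists>x y. m_pair mem p x y \<and> R x y)"
    and A_edge: "\<forall>x y. m_edge mem A x y \<longleftrightarrow> R x y" by blast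
  have "R x y \<Longrightarrow> x \<in>\<^sub>m w \<and> y \<in>\<^sub>m w" for x y using assms unfolding R_def by blast
  then have "\<forall>p. p \<in>\<^sub>m A \<longrightarrow> (\<exists>a b. a \<in>\<^sub>m w \<and> b \<in>\<^sub>m w \<and> m_pair mem p a b)"
    using A_pairs by blast
  moreover have "m_rel mem A" using A_pairs unfolding m_rel_def by blast
  ultimately show ?thesis using A_edge unfolding R_def by blast
qed

end

locale membership_code = Z_FTM_model +
  fixes X S f A :: 'a
  assumes X_in_S: "X \<in>\<^sub>m S"
    and S_transitive: "m_transitive mem S"
    and S_least: "\<And>Z. X \<in>\<^sub>m Z \<Longrightarrow> m_transitive mem Z \<Longrightarrow> m_subset mem S Z"
    and f_fun: "m_fun mem f" and f_injective: "m_injective mem f" and f_dom: "m_dom mem f S"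
    and A_rel: "m_rel mem A"
    and A_edge_iff: "m_edge mem A x y \<longleftrightarrow> (\<exists>a b. a \<in>\<^sub>m b \<and> m_edge mem f a x \<and> m_edge mem f b y)"
begin

lemma f_total: "a \<in>\<^sub>m S \<Longrightarrow> \<exists>x. m_edge mem f a x"
  using f_dom unfolding m_dom_def by blast

lemma f_domD: "m_edge mem f a x \<Longrightarrow> a \<in>\<^sub>m S"
  using f_dom unfolding m_dom_def by blast

lemma f_single: "m_edge mem f a x \<Longrightarrow> m_edge mem f a y \<Longrightarrow> x = y"
  using f_fun unfolding m_fun_def by blast

lemma f_inj: "m_edge mem f a x \<Longrightarrow> m_edge mem f b x \<Longrightarrow> a = b"
  using f_injective unfolding m_injective_def by blast

lemma fld_code: "m_fld mem A x \<Longrightarrow> \<exists>a. m_edge mem f a x"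
  unfolding m_fld_def using A_edge_iff by blast

lemma A_wf: "m_wf mem A"
  unfolding m_wf_def
proof (intro allI impI)
  fix T assume "(\<exists>x. x \<in>\<^sub>m T) \<and> (\<forall>x. x \<in>\<^sub>m T \<longrightarrow> m_fld mem A x)"
  then obtain x where x: "x \<in>\<^sub>m T" and T_fld: "\<And>x. x \<in>\<^sub>m T \<Longrightarrow> m_fld mem A x" by blast
  have "\<exists>B. \<forall>y. y \<in>\<^sub>m B \<longleftrightarrow> y \<in>\<^sub>m S \<and> (\<exists>x. m_edge mem f y x \<and> x \<in>\<^sub>m T)"
    by (rule separation[of "\<lambda>k. if k = 2 then f else T" 0 "FEx 1 (FAnd (fm_edge 2 0 1) (FMem 1 3))"])
      simp
  then obtain B where B: "\<forall>y. y \<in>\<^sub>m B \<longleftrightarrow> y \<in>\<^sub>m S \<and> (\<exists>x. m_edge mem f y x \<and> x \<in>\<^sub>m T)" ..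
  obtain a where "m_edge mem f a x" using fld_code[OF T_fld[OF x]] by blast
  then have "a \<in>\<^sub>m B" using B x f_domD by blast
  then obtain b where b: "b \<in>\<^sub>m B" "\<forall>z. z \<in>\<^sub>m b \<longrightarrow> \<not> z \<in>\<^sub>m B" using foundation by blast
  then obtain y where y: "m_edge mem f b y" "y \<in>\<^sub>m T" using B by blast
  have "\<not> m_edge mem A j y" if "j \<in>\<^sub>m T" for j
  proof
    assume "m_edge mem A j y"
    then obtain a' b' where "a' \<in>\<^sub>m b'" "m_edge mem f a' j" "m_edge mem f b' y" using A_edge_iff by blast
    then show False using b B y f_inj f_domD that by blast
  qed
  then show "\<exists>a. a \<in>\<^sub>m T \<and> (\<forall>j. j \<in>\<^sub>m T \<longrightarrow> \<not> m_edge mem A j a)" using y by blast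
qed

lemma A_extensional: "m_extensional mem A"
  unfolding m_extensional_def
proof (intro allI impI)
  fix u v assume H: "m_fld mem A u \<and> m_fld mem A v \<and> (\<forall>j. m_edge mem A j u \<longleftrightarrow> m_edge mem A j v)"
  obtain a b where a: "m_edge mem f a u" and b: "m_edge mem f b v" using fld_code H by blast
  have sub: "z \<in>\<^sub>m b'" if "z \<in>\<^sub>m a'" "m_edge mem f a' u'" "m_edge mem f b' v'"
      "\<forall>j. m_edge mem A j u' \<longleftrightarrow> m_edge mem A j v'" for z a' b' u' v'
  proof -
    have "z \<in>\<^sub>m S" using S_transitive f_domD that(1,2) unfolding m_transitive_def by blast
    then obtain x where x: "m_edge mem f z x" using f_total by blast
    then have "m_edge mem A x v'" using A_edge_iff that by blast
    then obtain z' b'' where "z' \<in>\<^sub>m b''" "m_edge mem f z' x" "m_edge mem f b'' v'" using A_edge_iff by blast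
    then show ?thesis using f_inj x that(3) by blast
  qed
  have "a = b" using sub[OF _ a b] sub[OF _ b a] H by (intro extensionality) blast
  then show "u = v" using a b f_single by blast
qed

lemma ex_collapse:
  "\<exists>Y eta. m_collapse mem A Y eta \<and> (\<forall>a x. m_edge mem f a x \<longrightarrow> m_fld mem A x \<longrightarrow> m_edge mem eta x a)"
proof -
  obtain C where C: "\<forall>p a b. p \<in>\<^sub>m f \<longrightarrow> m_pair mem p a b \<longrightarrow> a \<in>\<^sub>m C \<and> b \<in>\<^sub>m C"
    using ex_components by blast
  have "\<exists>eta. (\<forall>p. p \<in>\<^sub>m eta \<longrightarrow> (\<exists>x a. m_pair mem p x a \<and> m_edge mem f a x \<and> m_fld mem A x)) \<and>
      (\<forall>x a. m_edge mem eta x a \<longleftrightarrow> m_edge mem f a x \<and> m_fld mem A x)"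
    by (rule relation_comprehension[of _ C "\<lambda>k. if k = 3 then f else A" "FAnd (fm_edge 3 2 1) (fm_fld 4 1)"])
      (use C in \<open>auto simp: m_edge_def\<close>)
  then obtain eta where eta_pairs: "\<forall>p. p \<in>\<^sub>m eta \<longrightarrow> (\<exists>x a. m_pair mem p x a)"
    and eta: "\<And>x a. m_edge mem eta x a \<longleftrightarrow> m_edge mem f a x \<and> m_fld mem A x" by blast
  have "\<exists>Y. \<forall>a. a \<in>\<^sub>m Y \<longleftrightarrow> a \<in>\<^sub>m S \<and> (\<exists>x. m_edge mem f a x \<and> m_fld mem A x)"
    by (rule separation[of "\<lambda>k. if k = 2 then f else A" 0 "FEx 1 (FAnd (fm_edge 2 0 1) (fm_fld 3 1))"])
      simp
  then obtain Y where Y: "\<forall>a. a \<in>\<^sub>m Y \<longleftrightarrow> (\<exists>x. m_edge mem eta x a)"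
    using eta f_domD by blast
  have "m_transitive mem Y"
    unfolding m_transitive_def
  proof (intro allI impI)
    fix a z assume "a \<in>\<^sub>m Y" "z \<in>\<^sub>m a"
    moreover obtain x where x: "m_edge mem f a x" using Y eta \<open>a \<in>\<^sub>m Y\<close> by blast
    moreover have "z \<in>\<^sub>m S" using S_transitive f_domD x \<open>z \<in>\<^sub>m a\<close> unfolding m_transitive_def by blast
    then obtain x' where "m_edge mem f z x'" using f_total by blast
    ultimately have "m_edge mem A x' x" using A_edge_iff by blast
    then show "z \<in>\<^sub>m Y" using Y eta \<open>m_edge mem f z x'\<close> unfolding m_fld_def by blast
  qed
  moreover have "m_fun mem eta" "m_injective mem eta"
    unfolding m_fun_def m_rel_def m_injective_def using eta_pairs eta f_inj f_single by blast+
  moreover have "\<forall>x. (\<exists>a. m_edge mem eta x a) \<longleftrightarrow> m_fld mem A x" "m_ran mem eta Y"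
    using eta fld_code Y unfolding m_ran_def by blast+
  moreover have "m_edge mem A j k \<longleftrightarrow> a \<in>\<^sub>m b" if "m_edge mem eta j a" "m_edge mem eta k b" for j k a b
    using that eta A_edge_iff f_inj by blast
  ultimately show ?thesis unfolding m_collapse_def using eta by blast
qed

lemma chain_to_code_of_X:
  assumes v: "m_edge mem f X v" and x: "m_edge mem f a x"
  shows "m_chain mem A x v"
proof -
  have "\<exists>Z. \<forall>y. y \<in>\<^sub>m Z \<longleftrightarrow> y \<in>\<^sub>m S \<and> (\<exists>x. m_edge mem f y x \<and> m_chain mem A x v)"
    by (rule separation[of "\<lambda>k. if k = 2 then f else if k = 3 then A else v" 0
          "FEx 1 (FAnd (fm_edge 2 0 1) (fm_chain 3 1 4))"])
      simp
  then obtain Z where Z: "\<forall>y. y \<in>\<^sub>m Z \<longleftrightarrow> y \<in>\<^sub>m S \<and> (\<exists>x. m_edge mem f y x \<and> m_chain mem A x v)" ..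
  have "X \<in>\<^sub>m Z" using Z X_in_S v chain_refl by blast
  moreover have "m_transitive mem Z"
    unfolding m_transitive_def
  proof (intro allI impI)
    fix y z assume "y \<in>\<^sub>m Z" "z \<in>\<^sub>m y"
    then obtain x where x: "y \<in>\<^sub>m S" "m_edge mem f y x" "m_chain mem A x v" using Z by blast
    then have "z \<in>\<^sub>m S" using S_transitive \<open>z \<in>\<^sub>m y\<close> unfolding m_transitive_def by blast
    moreover obtain x' where x': "m_edge mem f z x'" using f_total calculation by blast
    moreover have "m_edge mem A x' x" using A_edge_iff x x' \<open>z \<in>\<^sub>m y\<close> by blast
    ultimately show "z \<in>\<^sub>m Z" using Z chain_prepend[OF x(3)] by blast
  qed
  ultimately have "a \<in>\<^sub>m Z" using S_least f_domD[OF x] unfolding m_subset_def by blast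
  then show ?thesis using Z x f_single by blast
qed

lemma A_empty_if_X_empty:
  assumes X: "m_empty mem X"
  shows "m_empty mem A"
proof -
  obtain sX where sX: "m_upair mem sX X X" using ex_upair by blast
  have "m_transitive mem sX"
    unfolding m_transitive_def
  proof (intro allI impI)
    fix y z assume "y \<in>\<^sub>m sX" "z \<in>\<^sub>m y"
    moreover have "y = X" using sX \<open>y \<in>\<^sub>m sX\<close> unfolding m_upair_def by blast
    ultimately show "z \<in>\<^sub>m sX" using X unfolding m_empty_def by blast
  qed
  moreover have "X \<in>\<^sub>m sX" using sX unfolding m_upair_def by blast
  ultimately have S_sX: "m_subset mem S sX" using S_least by blast
  have "\<not> m_edge mem A x y" for x y
  proof
    assume "m_edge mem A x y"
    then obtain a b where ab: "a \<in>\<^sub>m b" "m_edge mem f a x" "m_edge mem f b y" using A_edge_iff by blast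
    then have "a \<in>\<^sub>m sX" "b \<in>\<^sub>m sX" using f_domD S_sX unfolding m_subset_def by blast+
    then have "a = X" "b = X" using sX unfolding m_upair_def by blast+
    then show False using ab(1) X unfolding m_empty_def by blast
  qed
  then show ?thesis using A_rel unfolding m_rel_def m_empty_def m_edge_def by blast
qed

lemma ex_vertex_collapsing_to_X:
  "\<exists>v Y eta. m_vertex_digraph mem A \<and> m_ver mem A v \<and> m_collapse mem A Y eta \<and> m_val mem eta v X"
proof -
  obtain Y eta where collapse: "m_collapse mem A Y eta"
    and eta: "\<forall>a x. m_edge mem f a x \<longrightarrow> m_fld mem A x \<longrightarrow> m_edge mem eta x a"
    using ex_collapse by blast
  show ?thesis
  proof (cases "m_empty mem X")
    case True
    then have "m_empty mem A" by (rule A_empty_if_X_empty)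
    then have "\<not> m_edge mem eta X y" for y
      using collapse empty_no_edge unfolding m_collapse_def m_fld_def by blast
    then show ?thesis
      using True \<open>m_empty mem A\<close> collapse
      unfolding m_vertex_digraph_def m_ver_def m_val_def by blast
  next
    case False
    then obtain x0 where "x0 \<in>\<^sub>m X" unfolding m_empty_def by blast
    obtain v where v: "m_edge mem f X v" using f_total[OF X_in_S] by blast
    obtain x where x: "m_edge mem f x0 x" using f_total S_transitive X_in_S \<open>x0 \<in>\<^sub>m X\<close>
      unfolding m_transitive_def by blast
    have Av: "m_edge mem A x v" using A_edge_iff \<open>x0 \<in>\<^sub>m X\<close> x v by blast
    then have "m_fld mem A v" unfolding m_fld_def by blast
    have vertex: "m_is_vertex mem A v"
      unfolding m_is_vertex_def using \<open>m_fld mem A v\<close> fld_code chain_to_code_of_X[OF v] by blast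
    moreover have "\<not> m_empty mem A" using Av unfolding m_edge_def m_empty_def by blast
    moreover have "m_edge mem eta v X" using eta v \<open>m_fld mem A v\<close> by blast
    ultimately show ?thesis
      using collapse vertex_unique[OF A_wf]
      unfolding m_vertex_digraph_def m_ver_def m_val_def by blast
  qed
qed

end

context Z_FTM_model
begin

lemma ex_vertex_code:
  "\<exists>A w. m_omega mem w \<and> (\<forall>p. p \<in>\<^sub>m A \<longrightarrow> (\<exists>a b. a \<in>\<^sub>m w \<and> b \<in>\<^sub>m w \<and> m_pair mem p a b)) \<and>
     m_wf mem A \<and> m_extensional mem A \<and> m_vertex_digraph mem A \<and>
     (\<exists>v Y eta. m_ver mem A v \<and> m_collapse mem A Y eta \<and> m_val mem eta v X)"
proof -
  obtain S where S: "X \<in>\<^sub>m S" "m_transitive mem S"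
      "\<forall>Z. X \<in>\<^sub>m Z \<and> m_transitive mem Z \<longrightarrow> m_subset mem S Z"
    using ex_transitive_closure by blast
  obtain w f where w: "m_omega mem w" and f: "m_fun mem f" "m_injective mem f" "m_dom mem f S"
      "\<forall>y. (\<exists>x. m_edge mem f x y) \<longrightarrow> y \<in>\<^sub>m w"
    using countable by blast
  obtain A where A_pairs: "\<forall>p. p \<in>\<^sub>m A \<longrightarrow> (\<exists>a b. a \<in>\<^sub>m w \<and> b \<in>\<^sub>m w \<and> m_pair mem p a b)"
    and A: "m_rel mem A" "\<forall>x y. m_edge mem A x y \<longleftrightarrow> (\<exists>a b. a \<in>\<^sub>m b \<and> m_edge mem f a x \<and> m_edge mem f b y)"
    using ex_membership_code[OF f(4)] by blast
  interpret membership_code mem X S f A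
    by unfold_locales (use S f A in auto)
  show ?thesis using w A_pairs A_wf A_extensional ex_vertex_collapsing_to_X by blast
qed

end

theorem lemma8p4:
  fixes mem :: "'a \<Rightarrow> 'a \<Rightarrow> bool"
  assumes "Z_FTM_omega mem"
  shows "\<forall>X. \<exists>A w. m_omega mem w \<and>
           (\<forall>p. mem p A \<longrightarrow> (\<exists>a b. mem a w \<and> mem b w \<and> m_pair mem p a b)) \<and>
           m_wf mem A \<and> m_extensional mem A \<and> m_vertex_digraph mem A \<and>
           (\<exists>v Y eta. m_ver mem A v \<and> m_collapse mem A Y eta \<and> m_val mem eta v X)"
  using Z_FTM_model.ex_vertex_code[OF Z_FTM_model.intro[OF assms]] by blast

end
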